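(* Let $G$ be a finite, simple, connected graph and $k\ge 0$. If $G$ contains a $k$-supported cycle, then $W(G)\ge k-4$.
   Context: For a vertex $r$ of $G$ (the root) and $x\in V(G)$, let $\ell_r(x)=d_G(r,x)$. For an integer $n\ge 0$, let $R_r(n)$ be the set of edges $xy\in E(G)$ with $\max\{\ell_r(x),\ell_r(y)\}>n$, and write $x\simeq_n y$ if $x$ and $y$ lie in the same connected component of $(V(G),R_r(n))$ (in particular $x\simeq_n x$). Define $W(r)=\max_{n\ge 0}\max\{d_G(x,y): \ell_r(x)=\ell_r(y)=n,\ x\simeq_n y\}$ and $W(G)=\max_{r\in V(G)}W(r)$. A cycle $C$ in $G$ is $k$-supported if it can be partitioned into three edge-disjoint paths $I_1,I_2,I_3$, with $I_1\cap I_2$, $I_2\cap I_3$, $I_3\cap I_1$ each a single vertex, such that for all $u_i\in V(I_i)$ ($i=1,2,3$), $\max_{i,j} d_G(u_i,u_j)\ge k$. *)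

theory Defs
  imports Main
begin

definition simple_graph :: "'a set \<Rightarrow> 'a set set \<Rightarrow> bool" where
  "simple_graph V E \<longleftrightarrow> finite V \<and> (\<forall>e\<in>E. \<exists>x y. x \<in> V \<and> y \<in> V \<and> x \<noteq> y \<and> e = {x, y})"

definition walk :: "'a set \<Rightarrow> 'a set set \<Rightarrow> 'a list \<Rightarrow> bool" where
  "walk V F xs \<longleftrightarrow> xs \<noteq> [] \<and> set xs \<subseteq> V \<and>
     (\<forall>i. Suc i < length xs \<longrightarrow> {xs ! i, xs ! Suc i} \<in> F)"

definition connected_in :: "'a set \<Rightarrow> 'a set set \<Rightarrow> 'a \<Rightarrow> 'a \<Rightarrow> bool" where
  "connected_in V F x y \<longleftrightarrow> (\<exists>xs. walk V F xs \<and> hd xs = x \<and> last xs = y)"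

definition connected_graph :: "'a set \<Rightarrow> 'a set set \<Rightarrow> bool" where
  "connected_graph V E \<longleftrightarrow> V \<noteq> {} \<and> (\<forall>x\<in>V. \<forall>y\<in>V. connected_in V E x y)"

definition gdist :: "'a set \<Rightarrow> 'a set set \<Rightarrow> 'a \<Rightarrow> 'a \<Rightarrow> nat" where
  "gdist V E x y = (LEAST n. \<exists>xs. walk V E xs \<and> hd xs = x \<and> last xs = y \<and> length xs = Suc n)"

definition Redges :: "'a set \<Rightarrow> 'a set set \<Rightarrow> 'a \<Rightarrow> nat \<Rightarrow> 'a set set" where
  "Redges V E r n = {e \<in> E. \<exists>v\<in>e. gdist V E r v > n}"

definition simeq :: "'a set \<Rightarrow> 'a set set \<Rightarrow> 'a \<Rightarrow> nat \<Rightarrow> 'a \<Rightarrow> 'a \<Rightarrow> bool" where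
  "simeq V E r n x y \<longleftrightarrow> connected_in V (Redges V E r n) x y"

definition Wroot :: "'a set \<Rightarrow> 'a set set \<Rightarrow> 'a \<Rightarrow> nat" where
  "Wroot V E r = Max {gdist V E x y | x y n. x \<in> V \<and> y \<in> V \<and>
       gdist V E r x = n \<and> gdist V E r y = n \<and> simeq V E r n x y}"

definition Wgraph :: "'a set \<Rightarrow> 'a set set \<Rightarrow> nat" where
  "Wgraph V E = Max (Wroot V E ` V)"

definition is_cycle :: "'a set \<Rightarrow> 'a set set \<Rightarrow> 'a list \<Rightarrow> bool" where
  "is_cycle V E cs \<longleftrightarrow> length cs \<ge> 3 \<and> distinct cs \<and> set cs \<subseteq> V \<and>
     (\<forall>i < length cs. {cs ! i, cs ! ((Suc i) mod length cs)} \<in> E)"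

text \<open>A partition of the cycle into three edge-disjoint paths pairwise meeting
in a single vertex is determined by three cut positions a < b < c: the paths
are the arcs c_a..c_b, c_b..c_c, and c_c..c_{m-1},c_0..c_a.\<close>
definition k_supported :: "'a set \<Rightarrow> 'a set set \<Rightarrow> nat \<Rightarrow> 'a list \<Rightarrow> bool" where
  "k_supported V E k cs \<longleftrightarrow> is_cycle V E cs \<and>
     (\<exists>a b c. a < b \<and> b < c \<and> c < length cs \<and>
       (let I1 = {cs ! i | i. a \<le> i \<and> i \<le> b};
            I2 = {cs ! i | i. b \<le> i \<and> i \<le> c};
            I3 = {cs ! i | i. c \<le> i \<and> i < length cs} \<union> {cs ! i | i. i \<le> a}
        in \<forall>u1\<in>I1. \<forall>u2\<in>I2. \<forall>u3\<in>I3.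
             gdist V E u1 u2 \<ge> k \<or> gdist V E u2 u3 \<ge> k \<or> gdist V E u1 u3 \<ge> k))"

end

theory Submission
  imports Defs
begin

text \<open>Root the BFS levels at the vertex r shared by I1 and I2, and let u be a vertex of I3 of
minimal level n + 1 (positive, since r is not on I3). Walking along the cycle from u towards r
in either direction, the level first drops to n at a vertex x of I1, resp. y of I2, and up to
that point every edge has an endpoint above level n, so u, x, y are in one class of the
relation for level n. A neighbour z of u at level n joins that class as well. Hence x, y, z
are pairwise at distance at most W(G), so d(x,y), d(x,u), d(y,u) are all at most W(G) + 1,
and k-support forces k \<le> W(G) + 1.\<close>

lemma walk_Nil [simp]: "\<not> walk V F []"
  by (simp add: walk_def)

lemma walk_single [simp]: "walk V F [x] \<longleftrightarrow> x \<in> V"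
  by (simp add: walk_def)

lemma walk_Cons_Cons [simp]:
  "walk V F (x # y # xs) \<longleftrightarrow> x \<in> V \<and> {x, y} \<in> F \<and> walk V F (y # xs)"
proof -
  have "(\<forall>i. Suc i < length (x # y # xs) \<longrightarrow> P i) \<longleftrightarrow>
    P 0 \<and> (\<forall>i. Suc i < length (y # xs) \<longrightarrow> P (Suc i))" for P
    by (metis (full_types) Suc_less_eq length_Cons not0_implies_Suc zero_less_Suc)
  then show ?thesis by (auto simp: walk_def)
qed

lemma walk_set: "walk V F xs \<Longrightarrow> set xs \<subseteq> V"
  by (simp add: walk_def)

lemma walk_append:
  "walk V F xs \<Longrightarrow> walk V F ys \<Longrightarrow> last xs = hd ys \<Longrightarrow> walk V F (xs @ tl ys)"
  by (induction xs rule: induct_list012) (cases ys; auto dest: walk_set)+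

lemma walk_rev: "walk V F xs \<Longrightarrow> walk V F (rev xs)"
proof (induction xs rule: induct_list012)
  case (3 x y zs)
  then have "walk V F (rev (y # zs) @ tl [y, x])"
    by (intro walk_append) (auto simp: insert_commute dest: walk_set)
  then show ?case by simp
qed simp_all

lemma walk_map_upt:
  assumes "\<And>i. g i \<in> V" "\<And>i. {g i, g (Suc i)} \<in> F" "p \<le> q"
  shows "walk V F (map g [p..<Suc q])"
  using assms(3)
proof (induction q)
  case (Suc q)
  show ?case
  proof (cases "p = Suc q")
    case False
    then have "walk V F (map g [p..<Suc q] @ tl [g q, g (Suc q)])"
      using Suc assms(1,2) by (intro walk_append) auto
    then show ?thesis using Suc.prems by simp
  qed (simp add: assms(1))
qed (simp add: assms(1))

lemma walk_join:
  assumes "walk V F xs" "walk V F ys" "last xs = hd ys"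
  shows "walk V F (xs @ tl ys)" "hd (xs @ tl ys) = hd xs" "last (xs @ tl ys) = last ys"
    and "length (xs @ tl ys) = length xs + length ys - 1"
proof -
  have "xs \<noteq> []" "ys \<noteq> []" using assms(1,2) by auto
  then show "walk V F (xs @ tl ys)" "hd (xs @ tl ys) = hd xs" "last (xs @ tl ys) = last ys"
    and "length (xs @ tl ys) = length xs + length ys - 1"
    using assms by (auto simp: walk_append last_append last_tl neq_Nil_conv)
qed

lemma connected_in_sym: "connected_in V F x y \<Longrightarrow> connected_in V F y x"
  unfolding connected_in_def by (metis walk_rev hd_rev last_rev)

lemma connected_in_trans:
  "connected_in V F x y \<Longrightarrow> connected_in V F y z \<Longrightarrow> connected_in V F x z"
  unfolding connected_in_def by (metis walk_join(1-3))

lemma connected_in_edge: "{x, y} \<in> F \<Longrightarrow> x \<in> V \<Longrightarrow> y \<in> V \<Longrightarrow> connected_in V F x y"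
  unfolding connected_in_def by (intro exI[of _ "[x, y]"]) simp

lemma gdist_le_walk:
  assumes "walk V E xs" "hd xs = x" "last xs = y"
  shows "gdist V E x y \<le> length xs - 1"
proof -
  have "length xs = Suc (length xs - 1)" using assms(1) by (cases xs) auto
  then show ?thesis unfolding gdist_def using assms by (intro Least_le) blast
qed

lemma gdist_refl: "x \<in> V \<Longrightarrow> gdist V E x x = 0"
  using gdist_le_walk[of V E "[x]" x x] by simp

lemma gdist_edge: "{x, y} \<in> E \<Longrightarrow> x \<in> V \<Longrightarrow> y \<in> V \<Longrightarrow> gdist V E x y \<le> 1"
  using gdist_le_walk[of V E "[x, y]" x y] by simp

lemma shortest_walk_exists:
  assumes "connected_graph V E" "x \<in> V" "y \<in> V"
  obtains xs where "walk V E xs" "hd xs = x" "last xs = y" "length xs = Suc (gdist V E x y)"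
proof -
  obtain xs where xs: "walk V E xs" "hd xs = x" "last xs = y"
    using assms unfolding connected_graph_def connected_in_def by blast
  then have "length xs = Suc (length xs - 1)" by (cases xs) auto
  with xs have "\<exists>n xs. walk V E xs \<and> hd xs = x \<and> last xs = y \<and> length xs = Suc n" by blast
  then have "\<exists>xs. walk V E xs \<and> hd xs = x \<and> last xs = y \<and> length xs = Suc (gdist V E x y)"
    unfolding gdist_def by (rule LeastI_ex)
  then show ?thesis using that by blast
qed

lemma gdist_triangle:
  assumes "connected_graph V E" "x \<in> V" "y \<in> V" "z \<in> V"
  shows "gdist V E x z \<le> gdist V E x y + gdist V E y z"
proof -
  obtain xs where xs: "walk V E xs" "hd xs = x" "last xs = y" "length xs = Suc (gdist V E x y)"
    using shortest_walk_exists assms by metis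
  obtain ys where ys: "walk V E ys" "hd ys = y" "last ys = z" "length ys = Suc (gdist V E y z)"
    using shortest_walk_exists assms by metis
  have "gdist V E x z \<le> length (xs @ tl ys) - 1"
    using walk_join[OF xs(1) ys(1)] xs ys by (intro gdist_le_walk) auto
  then show ?thesis using walk_join(4)[OF xs(1) ys(1)] xs ys by simp
qed

lemma gdist_eq_0_iff:
  assumes "connected_graph V E" "x \<in> V" "y \<in> V"
  shows "gdist V E x y = 0 \<longleftrightarrow> x = y"
proof
  assume "gdist V E x y = 0"
  moreover obtain xs where "hd xs = x" "last xs = y" "length xs = Suc (gdist V E x y)"
    using shortest_walk_exists assms by metis
  ultimately show "x = y" by (auto simp: length_Suc_conv)
qed (simp add: gdist_refl assms)

lemma gdist_neighbour_le:
  assumes "connected_graph V E" "r \<in> V" "{u, v} \<in> E" "u \<in> V" "v \<in> V"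
  shows "gdist V E r v \<le> gdist V E r u + 1"
  using gdist_triangle[OF assms(1,2,4,5)] gdist_edge[OF assms(3-5)] by linarith

lemma gdist_Suc_predecessor:
  assumes "connected_graph V E" "r \<in> V" "u \<in> V" "gdist V E r u = Suc n"
  obtains z where "z \<in> V" "{z, u} \<in> E" "gdist V E r z = n"
proof -
  obtain xs where xs: "walk V E xs" "hd xs = r" "last xs = u" "length xs = Suc (Suc n)"
    using shortest_walk_exists assms by metis
  then obtain ys z where ys: "rev xs = u # z # ys" "length ys = n"
    by (cases "rev xs" rule: list.exhaust; cases "tl (rev xs)") (auto simp flip: last_rev)
  have "walk V E (u # z # ys)" using walk_rev[OF xs(1)] ys(1) by simp
  then have e: "{z, u} \<in> E" and zV: "z \<in> V" and walk: "walk V E (rev (z # ys))"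
    by (auto simp: insert_commute dest: walk_set walk_rev)
  have "r = last (u # z # ys)" using xs(2) ys(1) by (metis last_rev rev_rev_ident)
  then have "hd (rev (z # ys)) = r" by (simp add: hd_rev)
  then have "gdist V E r z \<le> n" using gdist_le_walk[OF walk] ys(2) by simp
  moreover have "Suc n \<le> gdist V E r z + 1"
    using gdist_neighbour_le[OF assms(1,2) e zV assms(3)] assms(4) by simp
  ultimately show ?thesis using that zV e by simp
qed

lemma gdist_le_Wgraph:
  assumes "simple_graph V E" "r \<in> V" "x \<in> V" "y \<in> V"
    and "gdist V E r x = n" "gdist V E r y = n" "simeq V E r n x y"
  shows "gdist V E x y \<le> Wgraph V E"
proof -
  have fin: "finite V" using assms(1) by (simp add: simple_graph_def)
  let ?S = "{gdist V E x y | x y n. x \<in> V \<and> y \<in> V \<and>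
       gdist V E r x = n \<and> gdist V E r y = n \<and> simeq V E r n x y}"
  have "?S \<subseteq> (\<lambda>(x, y). gdist V E x y) ` (V \<times> V)" by auto
  moreover have "finite ((\<lambda>(x, y). gdist V E x y) ` (V \<times> V))" using fin by simp
  ultimately have "finite ?S" by (rule finite_subset)
  moreover have "gdist V E x y \<in> ?S" using assms(3-7) by blast
  ultimately have "gdist V E x y \<le> Wroot V E r" unfolding Wroot_def by (rule Max_ge)
  also have "Wroot V E r \<le> Wgraph V E"
    unfolding Wgraph_def using fin assms(2) by (intro Max_ge) auto
  finally show ?thesis .
qed

lemma simeq_edge:
  "{x, y} \<in> E \<Longrightarrow> x \<in> V \<Longrightarrow> y \<in> V \<Longrightarrow> n < gdist V E r x \<Longrightarrow> simeq V E r n x y"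
  unfolding simeq_def Redges_def by (intro connected_in_edge) auto

lemma simeq_sym: "simeq V E r n x y \<Longrightarrow> simeq V E r n y x"
  unfolding simeq_def by (rule connected_in_sym)

lemma simeq_trans: "simeq V E r n x y \<Longrightarrow> simeq V E r n y z \<Longrightarrow> simeq V E r n x z"
  unfolding simeq_def by (rule connected_in_trans)

lemma walk_crosses_level:
  assumes "connected_graph V E" "r \<in> V" "walk V E xs"
    and "n < gdist V E r (hd xs)" "gdist V E r (last xs) \<le> n"
  shows "\<exists>v\<in>set xs. gdist V E r v = n \<and> simeq V E r n (hd xs) v"
  using assms(3-5)
proof (induction xs rule: induct_list012)
  case (3 x y zs)
  then have "x \<in> V" "y \<in> V" "{x, y} \<in> E" by (auto dest: walk_set)
  then have xy: "simeq V E r n x y" using 3 by (intro simeq_edge) auto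
  show ?case
  proof (cases "gdist V E r y \<le> n")
    case True
    have "gdist V E r x \<le> gdist V E r y + 1"
      using gdist_neighbour_le[OF assms(1,2)] \<open>{x, y} \<in> E\<close> \<open>x \<in> V\<close> \<open>y \<in> V\<close>
      by (metis insert_commute)
    then show ?thesis using True 3 xy by auto
  next
    case False
    then obtain v where "v \<in> set (y # zs)" "gdist V E r v = n" "simeq V E r n y v"
      using 3 by auto
    then show ?thesis using xy by (auto intro: simeq_trans)
  qed
qed auto

lemma gdist_le_Wgraph_Suc:
  assumes "simple_graph V E" "connected_graph V E" "r \<in> V" "x \<in> V" "u \<in> V"
    and "gdist V E r x = n" "gdist V E r u = Suc n" "simeq V E r n x u"
  shows "gdist V E x u \<le> Wgraph V E + 1"
proof -
  obtain z where z: "z \<in> V" "{z, u} \<in> E" "gdist V E r z = n"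
    by (rule gdist_Suc_predecessor[OF assms(2,3,5,7)])
  have "simeq V E r n u z"
    using z assms(5,7) by (intro simeq_edge) (auto simp: insert_commute)
  with assms(8) have "simeq V E r n x z" by (rule simeq_trans)
  then have "gdist V E x z \<le> Wgraph V E"
    by (rule gdist_le_Wgraph[OF assms(1,3,4) z(1) assms(6) z(3)])
  moreover have "gdist V E z u \<le> 1" by (rule gdist_edge[OF z(2) z(1) assms(5)])
  ultimately show ?thesis using gdist_triangle[OF assms(2,4) z(1) assms(5)] by linarith
qed

lemma walk_leaves_high_set:
  assumes "connected_graph V E" "r \<in> V" "walk V E P" "hd P = u" "last P = r"
    and "gdist V E r u = Suc n" "set P \<subseteq> A \<union> B" "\<And>v. v \<in> A \<Longrightarrow> n < gdist V E r v"
  obtains x where "x \<in> B" "gdist V E r x = n" "simeq V E r n u x"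
proof -
  have "\<exists>x\<in>set P. gdist V E r x = n \<and> simeq V E r n (hd P) x"
    using assms(4-6) gdist_refl[OF assms(2)] by (intro walk_crosses_level[OF assms(1-3)]) simp_all
  then show ?thesis using that assms(4,7,8) by blast
qed

lemma closed_walk_three_arcs:
  assumes "simple_graph V E" "connected_graph V E"
    and "\<And>i. g i \<in> V" "\<And>i. {g i, g (Suc i)} \<in> E"
    and "b \<le> c" "c \<le> d" "d \<le> e" "g e = g b" "g b \<notin> g ` {c..d}"
  obtains x y u where "x \<in> g ` {d..e}" "y \<in> g ` {b..c}" "u \<in> g ` {c..d}"
    and "gdist V E x y \<le> Wgraph V E"
    and "gdist V E x u \<le> Wgraph V E + 1" "gdist V E y u \<le> Wgraph V E + 1"
proof -
  define r where "r = g b"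
  have rV: "r \<in> V" using assms(3) by (simp add: r_def)
  obtain J where J: "J \<in> {c..d}" and J_min: "\<And>i. i \<in> {c..d} \<Longrightarrow> gdist V E r (g J) \<le> gdist V E r (g i)"
    using ex_has_least_nat[of "\<lambda>i. i \<in> {c..d}" c "\<lambda>i. gdist V E r (g i)"] assms(6) by auto
  define u where "u = g J"
  have "u \<noteq> r" using J assms(9) unfolding u_def r_def by (metis image_eqI)
  then have "gdist V E r u \<noteq> 0" using gdist_eq_0_iff[OF assms(2) rV assms(3)] by (simp add: u_def)
  then obtain n where n: "gdist V E r u = Suc n" using not0_implies_Suc by blast
  have high: "n < gdist V E r v" if "v \<in> g ` {c..d}" for v
    using that J_min n by (fastforce simp: u_def)
  have "walk V E (map g [J..<Suc e])"
    using J assms(7) by (intro walk_map_upt[where g = g, OF assms(3,4)]) simp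
  moreover have "hd (map g [J..<Suc e]) = u" "last (map g [J..<Suc e]) = r"
    using J assms(7,8) unfolding u_def r_def by (auto simp: hd_map hd_upt last_map simp del: upt_Suc)
  moreover have "set (map g [J..<Suc e]) \<subseteq> g ` ({c..d} \<union> {d..e})"
    using J by (auto simp del: upt_Suc)
  ultimately obtain x where x: "x \<in> g ` {d..e}" "gdist V E r x = n" "simeq V E r n u x"
    using walk_leaves_high_set[OF assms(2) rV _ _ _ n _ high] unfolding image_Un by metis
  have "walk V E (rev (map g [b..<Suc J]))"
    using J assms(5) by (intro walk_rev walk_map_upt[where g = g, OF assms(3,4)]) simp
  moreover have "hd (rev (map g [b..<Suc J])) = u" "last (rev (map g [b..<Suc J])) = r"
    using J assms(5) unfolding u_def r_def
    by (auto simp: hd_rev last_rev hd_map hd_upt last_map simp del: upt_Suc)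
  moreover have "set (rev (map g [b..<Suc J])) \<subseteq> g ` ({c..d} \<union> {b..c})"
    using J by (auto simp del: upt_Suc)
  ultimately obtain y where y: "y \<in> g ` {b..c}" "gdist V E r y = n" "simeq V E r n u y"
    using walk_leaves_high_set[OF assms(2) rV _ _ _ n _ high] unfolding image_Un by metis
  have xV: "x \<in> V" and yV: "y \<in> V" and uV: "u \<in> V"
    using x(1) y(1) assms(3) by (auto simp: u_def)
  show ?thesis
  proof (rule that[OF x(1) y(1)])
    show "u \<in> g ` {c..d}" using J by (simp add: u_def)
    show "gdist V E x y \<le> Wgraph V E"
      using gdist_le_Wgraph[OF assms(1) rV xV yV x(2) y(2) simeq_trans[OF simeq_sym[OF x(3)] y(3)]] .
    show "gdist V E x u \<le> Wgraph V E + 1"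
      using gdist_le_Wgraph_Suc[OF assms(1,2) rV xV uV x(2) n simeq_sym[OF x(3)]] .
    show "gdist V E y u \<le> Wgraph V E + 1"
      using gdist_le_Wgraph_Suc[OF assms(1,2) rV yV uV y(2) n simeq_sym[OF y(3)]] .
  qed
qed

text \<open>Reading cycle positions modulo the length turns the arc c..m-1, 0..a into the interval
{c..m+a}, followed by I1 as {m+a..m+b}; so the cycle becomes a walk with three consecutive arcs.\<close>

definition cycle_vertex :: "'a list \<Rightarrow> nat \<Rightarrow> 'a" where
  "cycle_vertex cs i = cs ! (i mod length cs)"

lemma cycle_vertex_add_length [simp]: "cycle_vertex cs (length cs + i) = cycle_vertex cs i"
  by (simp add: cycle_vertex_def)

lemma is_cycle_vertex_in:
  assumes "is_cycle V E cs"
  shows "cycle_vertex cs i \<in> V"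
proof -
  have "0 < length cs" "set cs \<subseteq> V" using assms by (auto simp: is_cycle_def)
  then show ?thesis unfolding cycle_vertex_def by (meson mod_less_divisor nth_mem subsetD)
qed

lemma is_cycle_adjacent:
  assumes "is_cycle V E cs"
  shows "{cycle_vertex cs i, cycle_vertex cs (Suc i)} \<in> E"
proof -
  have "0 < length cs" "\<forall>j < length cs. {cs ! j, cs ! (Suc j mod length cs)} \<in> E"
    using assms by (auto simp: is_cycle_def)
  then show ?thesis unfolding cycle_vertex_def by (metis mod_Suc_eq mod_less_divisor)
qed

lemma cycle_vertex_image:
  "b < length cs \<Longrightarrow> cycle_vertex cs ` {a..b} = {cs ! i | i. a \<le> i \<and> i \<le> b}"
  unfolding cycle_vertex_def by (auto simp: image_iff)

lemma cycle_vertex_image_shift: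
  "cycle_vertex cs ` {length cs + a..length cs + b} = cycle_vertex cs ` {a..b}"
proof -
  have "{length cs + a..length cs + b} = (+) (length cs) ` {a..b}" by simp
  then show ?thesis by (simp only: image_image cycle_vertex_add_length)
qed

lemma cycle_vertex_image_wrap:
  assumes "a < c" "c < length cs"
  shows "cycle_vertex cs ` {c..length cs + a} =
    {cs ! i | i. c \<le> i \<and> i < length cs} \<union> {cs ! i | i. i \<le> a}"
proof -
  have split: "{c..length cs + a} = {c..length cs - 1} \<union> {length cs + 0..length cs + a}"
    using assms by auto
  have "\<And>i. i \<le> length cs - 1 \<longleftrightarrow> i < length cs" using assms by auto
  then have before_seam: "cycle_vertex cs ` {c..length cs - 1} = {cs ! i | i. c \<le> i \<and> i < length cs}"
    using cycle_vertex_image[of "length cs - 1" cs c] assms by simp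
  have "cycle_vertex cs ` {length cs + 0..length cs + a} = cycle_vertex cs ` {0..a}"
    by (rule cycle_vertex_image_shift)
  also have "\<dots> = {cs ! i | i. 0 \<le> i \<and> i \<le> a}"
    using assms by (intro cycle_vertex_image) simp
  also have "\<dots> = {cs ! i | i. i \<le> a}" by simp
  finally have after_seam: "cycle_vertex cs ` {length cs + 0..length cs + a} = {cs ! i | i. i \<le> a}" .
  show ?thesis by (subst split) (simp only: image_Un before_seam after_seam)
qed

lemma k_supported_cycle_arcs:
  assumes "k_supported V E k cs"
  obtains a b c where "is_cycle V E cs" "a < b" "b < c" "c < length cs"
    and "cycle_vertex cs b \<notin> cycle_vertex cs ` {c..length cs + a}"
    and "\<And>u1 u2 u3. u1 \<in> cycle_vertex cs ` {length cs + a..length cs + b} \<Longrightarrow>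
      u2 \<in> cycle_vertex cs ` {b..c} \<Longrightarrow> u3 \<in> cycle_vertex cs ` {c..length cs + a} \<Longrightarrow>
      k \<le> gdist V E u1 u2 \<or> k \<le> gdist V E u2 u3 \<or> k \<le> gdist V E u1 u3"
proof -
  obtain a b c where cyc: "is_cycle V E cs" and abc: "a < b" "b < c" "c < length cs"
    and supp: "\<forall>u1\<in>{cs ! i | i. a \<le> i \<and> i \<le> b}. \<forall>u2\<in>{cs ! i | i. b \<le> i \<and> i \<le> c}.
      \<forall>u3\<in>{cs ! i | i. c \<le> i \<and> i < length cs} \<union> {cs ! i | i. i \<le> a}.
        k \<le> gdist V E u1 u2 \<or> k \<le> gdist V E u2 u3 \<or> k \<le> gdist V E u1 u3"
    using assms unfolding k_supported_def Let_def by blast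
  have I1: "cycle_vertex cs ` {length cs + a..length cs + b} = {cs ! i | i. a \<le> i \<and> i \<le> b}"
    unfolding cycle_vertex_image_shift using abc by (intro cycle_vertex_image) simp
  have I2: "cycle_vertex cs ` {b..c} = {cs ! i | i. b \<le> i \<and> i \<le> c}"
    using abc by (intro cycle_vertex_image)
  have I3: "cycle_vertex cs ` {c..length cs + a} =
      {cs ! i | i. c \<le> i \<and> i < length cs} \<union> {cs ! i | i. i \<le> a}"
    using abc by (intro cycle_vertex_image_wrap) simp_all
  have "distinct cs" using cyc by (simp add: is_cycle_def)
  then have "cs ! b \<notin> {cs ! i | i. c \<le> i \<and> i < length cs} \<union> {cs ! i | i. i \<le> a}"
    using abc by (auto simp: nth_eq_iff_index_eq)
  moreover have "cycle_vertex cs b = cs ! b" using abc by (simp add: cycle_vertex_def)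
  ultimately show ?thesis
  proof (intro that[OF cyc abc])
    fix u1 u2 u3
    assume "u1 \<in> cycle_vertex cs ` {length cs + a..length cs + b}"
      "u2 \<in> cycle_vertex cs ` {b..c}" "u3 \<in> cycle_vertex cs ` {c..length cs + a}"
    then show "k \<le> gdist V E u1 u2 \<or> k \<le> gdist V E u2 u3 \<or> k \<le> gdist V E u1 u3"
      using supp unfolding I1 I2 I3 by blast
  qed (simp_all only: I3 not_False_eq_True)
qed

theorem mainTheorem4:
  fixes V :: "'a set" and E :: "'a set set" and k :: nat
  assumes "simple_graph V E" and "connected_graph V E"
    and "\<exists>cs. k_supported V E k cs"
  shows "int (Wgraph V E) \<ge> int k - 4"
proof -
  from assms(3) obtain cs where supported: "k_supported V E k cs" ..
  obtain a b c where cyc: "is_cycle V E cs" and abc: "a < b" "b < c" "c < length cs"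
    and avoid: "cycle_vertex cs b \<notin> cycle_vertex cs ` {c..length cs + a}"
    and supp: "\<And>u1 u2 u3. u1 \<in> cycle_vertex cs ` {length cs + a..length cs + b} \<Longrightarrow>
      u2 \<in> cycle_vertex cs ` {b..c} \<Longrightarrow> u3 \<in> cycle_vertex cs ` {c..length cs + a} \<Longrightarrow>
      k \<le> gdist V E u1 u2 \<or> k \<le> gdist V E u2 u3 \<or> k \<le> gdist V E u1 u3"
    using k_supported_cycle_arcs[OF supported] by blast
  have arcs: "b \<le> c" "c \<le> length cs + a" "length cs + a \<le> length cs + b" using abc by auto
  obtain x y u where "x \<in> cycle_vertex cs ` {length cs + a..length cs + b}"
    "y \<in> cycle_vertex cs ` {b..c}" "u \<in> cycle_vertex cs ` {c..length cs + a}"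
    and "gdist V E x y \<le> Wgraph V E"
    and "gdist V E x u \<le> Wgraph V E + 1" "gdist V E y u \<le> Wgraph V E + 1"
    by (rule closed_walk_three_arcs[where g = "cycle_vertex cs", OF assms(1,2)
        is_cycle_vertex_in[OF cyc] is_cycle_adjacent[OF cyc] arcs cycle_vertex_add_length avoid])
  then have "k \<le> Wgraph V E + 1" using supp[of x y u] by auto
  then show ?thesis by simp
qed

end
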